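(* Let $X$ be a Hausdorff topological space and let $f:X\to X$ be a continuous weak topological contraction. Then $f$ has a unique fixed point.
   Context: A mapping $f:X\to X$ (not necessarily continuous or closed) is a weak topological contraction if for every open cover $\mathcal{U}$ of $X$ and every pair of points $x,y\in X$ there exist $n\in\mathbb{N}_0=\{0,1,2,\dots\}$ and $U\in\mathcal{U}$ such that $f^n[\{x,y\}]\subseteq U$, where $f^n$ is the $n$-fold iterate of $f$ and $f^0$ is the identity. *)

theory Defs
  imports "HOL-Analysis.Analysis"
begin

definition weak_top_contraction :: "'a topology \<Rightarrow> ('a \<Rightarrow> 'a) \<Rightarrow> bool" where
  "weak_top_contraction T f \<longleftrightarrow>
     f \<in> topspace T \<rightarrow> topspace T \<and>
     (\<forall>\<U>. (\<forall>U\<in>\<U>. openin T U) \<and> topspace T \<subseteq> \<Union>\<U> \<longrightarrow>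
        (\<forall>x\<in>topspace T. \<forall>y\<in>topspace T.
           \<exists>n::nat. \<exists>U\<in>\<U>. (f ^^ n) ` {x, y} \<subseteq> U))"

end

theory Submission
  imports Defs
begin

(* If f had no fixed point, then by continuity and the Hausdorff property every point has an
   open neighbourhood W disjoint from its image f ` W. These sets cover X, yet the pair x, f x
   would have to be moved by some iterate f^n into one of them, putting both f^n x and
   f (f^n x) into W. Uniqueness only needs T1: two distinct fixed points x, y are never moved,
   so they never lie together in a member of the cover by X - {x} and X - {y}. *)

lemma funpow_fixed_point: "f x = x \<Longrightarrow> (f ^^ n) x = x"
  by (induction n) auto

lemma weak_top_contraction_maps_topspace:
  "weak_top_contraction T f \<Longrightarrow> x \<in> topspace T \<Longrightarrow> f x \<in> topspace T"
  unfolding weak_top_contraction_def by blast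

lemma weak_top_contractionE:
  assumes "weak_top_contraction T f"
    and "\<And>U. U \<in> \<U> \<Longrightarrow> openin T U" and "topspace T \<subseteq> \<Union>\<U>"
    and "x \<in> topspace T" and "y \<in> topspace T"
  obtains n U where "U \<in> \<U>" "(f ^^ n) x \<in> U" "(f ^^ n) y \<in> U"
proof -
  have "\<exists>n. \<exists>U\<in>\<U>. (f ^^ n) ` {x, y} \<subseteq> U"
    using assms unfolding weak_top_contraction_def by blast
  then show ?thesis
    using that by blast
qed

lemma Hausdorff_moved_point_nbhd:
  assumes "Hausdorff_space T" and "continuous_map T T f"
    and "z \<in> topspace T" and "f z \<noteq> z"
  obtains W where "openin T W" "z \<in> W" "f ` W \<inter> W = {}"
proof -
  have "f z \<in> topspace T"
    using continuous_map_image_subset_topspace[OF assms(2)] assms(3) by blast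
  moreover have "z \<noteq> f z"
    using assms(4) by simp
  ultimately obtain U V where UV: "openin T U" "openin T V" "z \<in> U" "f z \<in> V" "disjnt U V"
    using assms(1,3) unfolding Hausdorff_space_def by metis
  show ?thesis
  proof (rule that)
    show "openin T {x \<in> U. f x \<in> V}"
      using openin_continuous_map_preimage_gen[OF assms(2) UV(1,2)] .
    show "z \<in> {x \<in> U. f x \<in> V}"
      using UV(3,4) by simp
    show "f ` {x \<in> U. f x \<in> V} \<inter> {x \<in> U. f x \<in> V} = {}"
      using UV(5) by (auto simp: disjnt_iff)
  qed
qed

lemma weak_top_contraction_fixed_point_exists:
  assumes "topspace T \<noteq> {}" and "Hausdorff_space T" and "continuous_map T T f"
    and "weak_top_contraction T f"
  shows "\<exists>x\<in>topspace T. f x = x"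
proof (rule ccontr)
  assume no_fixed_point: "\<not> (\<exists>x\<in>topspace T. f x = x)"
  define \<U> where "\<U> = {W. openin T W \<and> f ` W \<inter> W = {}}"
  have "\<And>W. W \<in> \<U> \<Longrightarrow> openin T W"
    unfolding \<U>_def by simp
  moreover have "topspace T \<subseteq> \<Union>\<U>"
  proof
    fix z
    assume z: "z \<in> topspace T"
    with no_fixed_point have "f z \<noteq> z"
      by blast
    then obtain W where "openin T W" "z \<in> W" "f ` W \<inter> W = {}"
      by (rule Hausdorff_moved_point_nbhd[OF assms(2,3) z])
    then show "z \<in> \<Union>\<U>"
      unfolding \<U>_def by blast
  qed
  moreover obtain x where x: "x \<in> topspace T"
    using assms(1) by blast
  moreover have "f x \<in> topspace T"
    using weak_top_contraction_maps_topspace[OF assms(4) x] .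
  ultimately obtain n W where "W \<in> \<U>" "(f ^^ n) x \<in> W" "(f ^^ n) (f x) \<in> W"
    by (rule weak_top_contractionE[OF assms(4)])
  then have "f ` W \<inter> W = {}" "(f ^^ n) x \<in> W" "f ((f ^^ n) x) \<in> W"
    unfolding \<U>_def by (simp_all add: funpow_swap1)
  then show False
    by blast
qed

lemma weak_top_contraction_fixed_point_unique:
  assumes "t1_space T" and "weak_top_contraction T f"
    and "x \<in> topspace T" "f x = x" and "y \<in> topspace T" "f y = y"
  shows "x = y"
proof (rule ccontr)
  assume "x \<noteq> y"
  define \<U> where "\<U> = {topspace T - {x}, topspace T - {y}}"
  have "\<And>U. U \<in> \<U> \<Longrightarrow> openin T U"
    unfolding \<U>_def using assms(1,3,5) by (auto simp: closedin_t1_singleton)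
  moreover have "topspace T \<subseteq> \<Union>\<U>"
    unfolding \<U>_def using \<open>x \<noteq> y\<close> by blast
  ultimately obtain n U where "U \<in> \<U>" "(f ^^ n) x \<in> U" "(f ^^ n) y \<in> U"
    using assms(3,5) by (rule weak_top_contractionE[OF assms(2)])
  moreover have "(f ^^ n) x = x" "(f ^^ n) y = y"
    using assms(4,6) by (simp_all add: funpow_fixed_point)
  ultimately show False
    unfolding \<U>_def using \<open>x \<noteq> y\<close> by blast
qed

theorem theorem2:
  fixes T :: "'a topology" and f :: "'a \<Rightarrow> 'a"
  assumes "topspace T \<noteq> {}"
    and "Hausdorff_space T"
    and "continuous_map T T f"
    and "weak_top_contraction T f"
  shows "\<exists>!x. x \<in> topspace T \<and> f x = x"
  using weak_top_contraction_fixed_point_exists[OF assms]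
    weak_top_contraction_fixed_point_unique[OF Hausdorff_imp_t1_space[OF assms(2)] assms(4)]
  by blast

end
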